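(* Let $p,q\ge0$ be integers and $\alpha=(\alpha_1,\dots,\alpha_p)$, $\beta=(\beta_1,\dots,\beta_q)$ with all $\alpha_i>0,\beta_j>0$. Let ${}_p\rho_q(n)=n!\,\frac{(\beta_1)_n\cdots(\beta_q)_n}{(\alpha_1)_n\cdots(\alpha_p)_n}$, ${}_pF_q(\alpha,\beta;x)=\sum_{n\ge0}\frac{x^n}{{}_p\rho_q(n)}$, and for $w$ with $|w|^2$ strictly inside the disc of convergence let $|w;\alpha,\beta\rangle={}_pF_q(\alpha,\beta;|w|^2)^{-1/2}\sum_{n\ge0}\frac{w^n}{\sqrt{{}_p\rho_q(n)}}|n\rangle$ in the Hilbert space with orthonormal basis $\{|n\rangle\}_{n\ge0}$, where $\hat n|n\rangle=n|n\rangle$. Let $\Omega>0$, $\tau=2\pi/\Omega$, $k\ge1$ an integer, and $z$ with $|z|^2$ strictly inside the disc of convergence. Then $$e^{-i\Omega(\tau/k)\hat n^2}|z;\alpha,\beta\rangle=\frac1k\sum_{j=0}^{k-1}\sum_{l=0}^{k-1}e^{-2\pi i j(j+l)/k}\,|ze^{2\pi i l/k};\alpha,\beta\rangle .$$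
   Context: $(a)_n=a(a+1)\cdots(a+n-1)$, $(a)_0=1$, is the Pochhammer symbol. The series ${}_pF_q$ converges for all $x$ if $p\le q$ and for $|x|<1$ if $p=q+1$. The operator $e^{-i\Omega t\hat n^2}$ acts by $|n\rangle\mapsto e^{-i\Omega t n^2}|n\rangle$. *)

theory Defs
  imports "HOL-Analysis.Analysis"
begin

definition rho :: "real list \<Rightarrow> real list \<Rightarrow> nat \<Rightarrow> real" where
  "rho \<alpha> \<beta> n = fact n * (\<Prod>b\<leftarrow>\<beta>. pochhammer b n) / (\<Prod>a\<leftarrow>\<alpha>. pochhammer a n)"

definition hypF :: "real list \<Rightarrow> real list \<Rightarrow> real \<Rightarrow> real" where
  "hypF \<alpha> \<beta> x = (\<Sum>n. x ^ n / rho \<alpha> \<beta> n)"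

definition hypF_radius :: "real list \<Rightarrow> real list \<Rightarrow> ereal" where
  "hypF_radius \<alpha> \<beta> = conv_radius (\<lambda>n. 1 / rho \<alpha> \<beta> n)"

text \<open>States in the Hilbert space with orthonormal basis |n>, represented by their
  coefficient sequences n \<mapsto> <n|psi>.  The coherent state |w;alpha,beta>:\<close>
definition coh :: "real list \<Rightarrow> real list \<Rightarrow> complex \<Rightarrow> nat \<Rightarrow> complex" where
  "coh \<alpha> \<beta> w n = complex_of_real (hypF \<alpha> \<beta> ((cmod w)\<^sup>2) powr (-1/2))
      * w ^ n / complex_of_real (sqrt (rho \<alpha> \<beta> n))"

definition evol :: "real \<Rightarrow> real \<Rightarrow> (nat \<Rightarrow> complex) \<Rightarrow> nat \<Rightarrow> complex" where
  "evol \<Omega> t \<psi> n = exp (- \<i> * complex_of_real (\<Omega> * t * (real n)\<^sup>2)) * \<psi> n"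

end

theory Submission
  imports Defs
begin

text \<open>
  Writing \<open>e(m) = exp(2\<pi>i m/k)\<close> (\<open>unity_root k m\<close> below), rotating
  \<open>z\<close> by \<open>e(l)\<close> multiplies the \<open>n\<close>-th coefficient of \<open>|z;\<alpha>,\<beta>\<rangle>\<close> by \<open>e(l n)\<close>, while
  \<open>exp(-i\<Omega>(\<tau>/k)n\<^sup>2) = e(-n\<^sup>2)\<close>.  Since \<open>-j(j+l) + l n = -j\<^sup>2 + (n-j) l\<close>, the sum over \<open>l\<close>
  is \<open>k\<close> if \<open>j \<equiv> n (mod k)\<close> and \<open>0\<close> otherwise, so only \<open>j = n mod k\<close> survives, giving
  \<open>e(-(n mod k)\<^sup>2) = e(-n\<^sup>2)\<close>.
\<close>

definition unity_root :: "nat \<Rightarrow> int \<Rightarrow> complex" where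
  "unity_root k m = exp (2 * pi * \<i> * of_int m / of_nat k)"

lemma norm_unity_root [simp]: "cmod (unity_root k m) = 1"
  unfolding unity_root_def by (simp add: norm_exp_eq_Re)

lemma unity_root_add: "unity_root k (a + b) = unity_root k a * unity_root k b"
  unfolding unity_root_def by (simp add: add_divide_distrib distrib_left exp_add)

lemma unity_root_mult_of_nat: "unity_root k (m * int n) = unity_root k m ^ n"
  unfolding unity_root_def by (simp flip: exp_of_nat_mult add: mult_ac)

lemma unity_root_multiple: "k > 0 \<Longrightarrow> unity_root k (int k * q) = 1"
  unfolding unity_root_def by (simp add: mult_ac)

lemma unity_root_eq_1_iff:
  assumes "k > 0"
  shows "unity_root k m = 1 \<longleftrightarrow> int k dvd m"
proof
  assume "unity_root k m = 1"
  then obtain q :: int where "2 * pi * real_of_int m / real k = real_of_int (2 * q) * pi"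
    unfolding unity_root_def exp_eq_1 by auto
  then have "real_of_int m = real_of_int (int k * q)"
    using assms by (simp add: field_simps)
  then show "int k dvd m"
    by (simp only: of_int_eq_iff) simp
qed (use assms unity_root_multiple in auto)

lemma unity_root_cong:
  assumes "int k dvd a - b"
  shows "unity_root k a = unity_root k b"
proof (cases "k = 0")
  case True
  then show ?thesis using assms by simp
next
  case False
  obtain q where "a = b + int k * q"
    using assms by (metis dvd_def diff_add_cancel add.commute)
  then show ?thesis using False by (simp add: unity_root_add unity_root_multiple)
qed

lemma sum_unity_root:
  assumes "k > 0"
  shows "(\<Sum>l<k. unity_root k (m * int l)) = (if int k dvd m then of_nat k else 0)"
proof -
  have "(\<Sum>l<k. unity_root k (m * int l)) = (\<Sum>l<k. unity_root k m ^ l)"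
    by (simp add: unity_root_mult_of_nat)
  moreover have "unity_root k m ^ k = 1"
    using assms by (simp flip: unity_root_mult_of_nat add: unity_root_eq_1_iff)
  ultimately show ?thesis
    using assms by (simp add: unity_root_eq_1_iff sum_gp_strict)
qed

lemma int_dvd_diff_iff_eq_mod:
  assumes "j < k"
  shows "int k dvd int n - int j \<longleftrightarrow> j = n mod k"
proof -
  have "int k dvd int n - int j \<longleftrightarrow> n mod k = j mod k"
    by (simp flip: mod_eq_dvd_iff zmod_int)
  then show ?thesis using assms by auto
qed

lemma sum_unity_root_quadratic:
  assumes k: "k > 0"
  shows "(1 / of_nat k) * (\<Sum>j<k. \<Sum>l<k. unity_root k (- int (j * (j + l))) * unity_root k (int l * int n))
    = unity_root k (- (int n)\<^sup>2)"
proof -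
  have summand: "unity_root k (- int (j * (j + l))) * unity_root k (int l * int n)
      = unity_root k (- (int j)\<^sup>2) * unity_root k ((int n - int j) * int l)" for j l
  proof -
    have "- int (j * (j + l)) + int l * int n = - (int j)\<^sup>2 + (int n - int j) * int l"
      by (simp add: power2_eq_square algebra_simps)
    then show ?thesis by (metis unity_root_add)
  qed
  have "(\<Sum>j<k. \<Sum>l<k. unity_root k (- int (j * (j + l))) * unity_root k (int l * int n))
      = (\<Sum>j<k. unity_root k (- (int j)\<^sup>2) * (if int k dvd int n - int j then of_nat k else 0))"
    unfolding summand by (simp add: sum_unity_root[OF k] flip: sum_distrib_left)
  also have "\<dots> = (\<Sum>j<k. if j = n mod k then of_nat k * unity_root k (- (int j)\<^sup>2) else 0)"
    by (intro sum.cong) (auto simp: int_dvd_diff_iff_eq_mod)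
  also have "\<dots> = of_nat k * unity_root k (- (int (n mod k))\<^sup>2)"
    using k by (simp add: sum.delta')
  also have "unity_root k (- (int (n mod k))\<^sup>2) = unity_root k (- (int n)\<^sup>2)"
  proof (rule unity_root_cong)
    have "(int n)\<^sup>2 mod int k = (int (n mod k))\<^sup>2 mod int k"
      by (simp add: of_nat_mod power_mod)
    then show "int k dvd - (int (n mod k))\<^sup>2 - - (int n)\<^sup>2"
      by (simp add: mod_eq_dvd_iff)
  qed
  finally show ?thesis using k by simp
qed

lemma coh_mult_unimodular:
  assumes "cmod u = 1"
  shows "coh \<alpha> \<beta> (z * u) n = u ^ n * coh \<alpha> \<beta> z n"
  unfolding coh_def using assms by (simp add: norm_mult power_mult_distrib)

lemma evol_fractional_revival_time:
  assumes "\<Omega> \<noteq> 0"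
  shows "evol \<Omega> ((2 * pi / \<Omega>) / real k) \<psi> n = unity_root k (- (int n)\<^sup>2) * \<psi> n"
proof -
  have "\<Omega> * (2 * pi / \<Omega> / real k) * (real n)\<^sup>2 = 2 * pi * (real n)\<^sup>2 / real k"
    using assms by simp
  then show ?thesis
    by (simp add: evol_def unity_root_def mult_ac)
qed

theorem mainTheorem4:
  fixes \<alpha> \<beta> :: "real list" and \<Omega> :: real and k :: nat and z :: complex
  assumes "\<forall>a\<in>set \<alpha>. a > 0" and "\<forall>b\<in>set \<beta>. b > 0"
    and "\<Omega> > 0" and "k \<ge> 1"
    and "ereal ((cmod z)\<^sup>2) < hypF_radius \<alpha> \<beta>"
  shows "evol \<Omega> ((2 * pi / \<Omega>) / real k) (coh \<alpha> \<beta> z) =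
    (\<lambda>n. (1 / of_nat k) * (\<Sum>j<k. \<Sum>l<k.
        exp (- 2 * pi * \<i> * of_nat (j * (j + l)) / of_nat k)
        * coh \<alpha> \<beta> (z * exp (2 * pi * \<i> * of_nat l / of_nat k)) n))"
proof -
  have k: "k > 0" using \<open>k \<ge> 1\<close> by simp
  have summand: "exp (- 2 * pi * \<i> * of_nat (j * (j + l)) / of_nat k)
        * coh \<alpha> \<beta> (z * exp (2 * pi * \<i> * of_nat l / of_nat k)) n
      = unity_root k (- int (j * (j + l))) * unity_root k (int l * int n) * coh \<alpha> \<beta> z n" for j l n
  proof -
    have "exp (- 2 * pi * \<i> * of_nat (j * (j + l)) / of_nat k) = unity_root k (- int (j * (j + l)))"
      and "exp (2 * pi * \<i> * of_nat l / of_nat k) = unity_root k (int l)"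
      by (simp_all add: unity_root_def)
    then show ?thesis by (simp add: coh_mult_unimodular unity_root_mult_of_nat)
  qed
  have coefficient: "(1 / of_nat k) * (\<Sum>j<k. \<Sum>l<k.
        unity_root k (- int (j * (j + l))) * unity_root k (int l * int n) * coh \<alpha> \<beta> z n)
      = evol \<Omega> ((2 * pi / \<Omega>) / real k) (coh \<alpha> \<beta> z) n" for n
    unfolding sum_distrib_right[symmetric] mult.assoc[symmetric] sum_unity_root_quadratic[OF k]
    using \<open>\<Omega> > 0\<close> by (subst evol_fractional_revival_time) auto
  show ?thesis
    unfolding summand coefficient ..
qed

end
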